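(* For every nonnegative integer $r$, $$\int_0^{\frac{\pi}{2}}\sin^{2r}x\,\sin\frac{x}{2}\,\mathrm{d}x=\frac{16^r}{(4r+1)\binom{4r}{2r}}\left(2+\sqrt{2}\sum_{k=0}^r \frac{\binom{4k}{2k}}{(4k-1)16^k}\right).$$ *)

theory Defs
  imports "HOL-Analysis.Analysis"
begin

end

theory Submission
  imports Defs
begin

text \<open>
  Write \<open>J m\<close> for \<open>\<integral>\<^sub>0\<^sup>\<pi>\<^sup>/\<^sup>2 sin\<^sup>m x sin (x/2) dx\<close> and \<open>n = m + 2\<close>. Integrating by parts twice, with
  the antiderivative \<open>-2 sin\<^sup>n x cos (x/2) + 4n sin\<^sup>n\<^sup>-\<^sup>1 x cos x sin (x/2)\<close>, gives
  \<open>(4n\<^sup>2 - 1) J n = 4n(n - 1) J m + \<surd>2\<close>, the \<open>\<surd>2 = 2 cos (\<pi>/4)\<close> being the boundary term.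
  For \<open>a\<^sub>r = binom(4r, 2r) / 16\<^sup>r\<close> one has \<open>4(2r+2)(2r+1) a\<^sub>r\<^sub>+\<^sub>1 = (4r+3)(4r+1) a\<^sub>r\<close>, so on even
  exponents the recurrence says that \<open>(4r+1) a\<^sub>r J(2r)\<close> increases by \<open>\<surd>2 a\<^sub>r\<^sub>+\<^sub>1 / (4r+3)\<close>
  at each step; summing from \<open>J 0 = 2 - \<surd>2\<close> gives the closed form.
\<close>

lemma central_binomial_Suc:
  "(n + 1) * (2 * n + 2 choose n + 1) = 2 * (2 * n + 1) * (2 * n choose n)"
proof -
  have "(n + 1) * (2 * n + 2 choose n + 1) = (2 * n + 2) * (2 * n + 1 choose n)"
    using Suc_times_binomial[of n "2 * n + 1"] by simp
  moreover have "(n + 1) * (2 * n + 1 choose n) = (2 * n + 1) * (2 * n choose n)"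
    using Suc_times_binomial[of n "2 * n"] binomial_symmetric[of n "2 * n + 1"] by simp
  ultimately have "(n + 1) * ((n + 1) * (2 * n + 2 choose n + 1)) = (n + 1) * (2 * (2 * n + 1) * (2 * n choose n))"
    by (simp add: algebra_simps)
  then show ?thesis
    by (simp only: mult_cancel1) simp
qed

lemma central_binomial_double_Suc:
  "2 * Suc r * (2 * r + 1) * (4 * Suc r choose 2 * Suc r) = 4 * (4 * r + 3) * (4 * r + 1) * (4 * r choose 2 * r)"
proof -
  have index_arith: "2 * (2 * r + 1) = 4 * r + 2" "4 * r + 2 + 2 = 4 * Suc r" "4 * r + 2 + 1 = 4 * r + 3"
    "2 * r + 1 + 1 = 2 * Suc r" "2 * (2 * r) = 4 * r"
    by simp_all
  have outer: "2 * Suc r * (4 * Suc r choose 2 * Suc r) = 2 * (4 * r + 3) * (4 * r + 2 choose 2 * r + 1)"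
    using central_binomial_Suc[of "2 * r + 1"] by (simp only: index_arith)
  have inner: "(2 * r + 1) * (4 * r + 2 choose 2 * r + 1) = 2 * (4 * r + 1) * (4 * r choose 2 * r)"
    using central_binomial_Suc[of "2 * r"] by (simp only: index_arith)
  have "2 * Suc r * (2 * r + 1) * (4 * Suc r choose 2 * Suc r)
      = (2 * r + 1) * (2 * Suc r * (4 * Suc r choose 2 * Suc r))"
    by (simp only: ac_simps)
  also have "\<dots> = 2 * (4 * r + 3) * ((2 * r + 1) * (4 * r + 2 choose 2 * r + 1))"
    unfolding outer by (simp only: ac_simps)
  also have "\<dots> = 4 * (4 * r + 3) * (4 * r + 1) * (4 * r choose 2 * r)"
    unfolding inner by (simp add: algebra_simps)
  finally show ?thesis .
qed

lemma central_binomial_weight_Suc: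
  "4 * (2 * real r + 2) * (2 * real r + 1) * (real (4 * Suc r choose 2 * Suc r) / 16 ^ Suc r)
    = (4 * real r + 3) * (4 * real r + 1) * (real (4 * r choose 2 * r) / 16 ^ r)"
proof -
  define c where "c = real (4 * r choose 2 * r)"
  define c' where "c' = real (4 * Suc r choose 2 * Suc r)"
  have "real (2 * Suc r * (2 * r + 1) * (4 * Suc r choose 2 * Suc r))
      = real (4 * (4 * r + 3) * (4 * r + 1) * (4 * r choose 2 * r))"
    by (simp only: central_binomial_double_Suc)
  then have binom_nat: "(2 * real r + 2) * (2 * real r + 1) * c' = 4 * (4 * real r + 3) * (4 * real r + 1) * c"
    unfolding c_def c'_def by (simp only: of_nat_mult of_nat_add of_nat_Suc of_nat_numeral) (simp add: algebra_simps)
  have "4 * (2 * real r + 2) * (2 * real r + 1) * (c' / 16 ^ Suc r) = 4 * ((2 * real r + 2) * (2 * real r + 1) * c') / (16 * 16 ^ r)"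
    by (simp add: field_simps)
  also have "\<dots> = (4 * real r + 3) * (4 * real r + 1) * (c / 16 ^ r)"
    unfolding binom_nat by (simp add: field_simps)
  finally show ?thesis
    by (simp only: c_def c'_def)
qed

definition sin_pow_half_integral :: "nat \<Rightarrow> real" where
  "sin_pow_half_integral m = integral {0..pi/2} (\<lambda>x. sin x ^ m * sin (x / 2))"

lemma sin_pow_half_has_integral:
  "((\<lambda>x. sin x ^ m * sin (x / 2)) has_integral sin_pow_half_integral m) {0..pi/2}"
  unfolding sin_pow_half_integral_def
  by (intro integrable_integral integrable_continuous_interval continuous_intros) auto

lemma sin_pow_half_integral_0: "sin_pow_half_integral 0 = 2 - sqrt 2"
proof -
  define F where "F x = - 2 * cos (x / 2)" for x :: real
  have "((\<lambda>x. sin x ^ 0 * sin (x / 2)) has_integral F (pi / 2) - F 0) {0..pi/2}"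
  proof (rule fundamental_theorem_of_calculus)
    fix x :: real
    have "(F has_real_derivative sin x ^ 0 * sin (x / 2)) (at x)"
      unfolding F_def by (rule derivative_eq_intros refl | simp)+
    then show "(F has_vector_derivative sin x ^ 0 * sin (x / 2)) (at x within {0..pi/2})"
      by (simp add: has_real_derivative_iff_has_vector_derivative has_vector_derivative_at_within)
  qed simp
  moreover have "F (pi / 2) - F 0 = 2 - sqrt 2"
    by (simp add: F_def cos_45)
  ultimately show ?thesis
    using has_integral_unique[OF sin_pow_half_has_integral] by simp
qed

lemma sin_pow_half_antiderivative:
  fixes m :: nat and x :: real
  shows "((\<lambda>x. - 2 * sin x ^ (m + 2) * cos (x / 2) + 4 * real (m + 2) * sin x ^ (m + 1) * cos x * sin (x / 2))
    has_real_derivative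
      (1 - 4 * real (m + 2) ^ 2) * (sin x ^ (m + 2) * sin (x / 2))
      + 4 * real (m + 2) * real (m + 1) * (sin x ^ m * sin (x / 2))) (at x)"
proof -
  \<comment> \<open>\<open>algebra\<close> does not treat a power with symbolic exponent as an atom, so it gets a name\<close>
  define p where "p = sin x ^ m"
  have pyth: "cos x * cos x = 1 - sin x * sin x"
    by (simp add: cos_squared_eq power2_eq_square[symmetric])
  show ?thesis
    apply (rule derivative_eq_intros refl | simp)+
    apply (fold p_def)
    using pyth by algebra
qed

lemma sin_pow_half_integral_recurrence:
  "(4 * real (m + 2) ^ 2 - 1) * sin_pow_half_integral (m + 2)
     = 4 * real (m + 2) * real (m + 1) * sin_pow_half_integral m + sqrt 2"
proof -
  define F where "F x = - 2 * sin x ^ (m + 2) * cos (x / 2) + 4 * real (m + 2) * sin x ^ (m + 1) * cos x * sin (x / 2)"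
    for x :: real
  define f where "f x = (1 - 4 * real (m + 2) ^ 2) * (sin x ^ (m + 2) * sin (x / 2))
      + 4 * real (m + 2) * real (m + 1) * (sin x ^ m * sin (x / 2))" for x :: real
  have "(f has_integral F (pi / 2) - F 0) {0..pi/2}"
  proof (rule fundamental_theorem_of_calculus)
    fix x :: real
    have "(F has_real_derivative f x) (at x)"
      unfolding F_def f_def by (rule sin_pow_half_antiderivative)
    then show "(F has_vector_derivative f x) (at x within {0..pi/2})"
      by (simp add: has_real_derivative_iff_has_vector_derivative has_vector_derivative_at_within)
  qed simp
  moreover have "(f has_integral (1 - 4 * real (m + 2) ^ 2) * sin_pow_half_integral (m + 2)
      + 4 * real (m + 2) * real (m + 1) * sin_pow_half_integral m) {0..pi/2}"
    unfolding f_def by (intro has_integral_add has_integral_mult_right sin_pow_half_has_integral)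
  moreover have "F (pi / 2) = - sqrt 2" "F 0 = 0"
    by (simp_all add: F_def cos_45)
  ultimately have "(1 - 4 * real (m + 2) ^ 2) * sin_pow_half_integral (m + 2)
      + 4 * real (m + 2) * real (m + 1) * sin_pow_half_integral m = - sqrt 2"
    using has_integral_unique by (metis diff_zero)
  then show ?thesis
    by (simp add: algebra_simps)
qed

lemma sin_pow_half_integral_even_step:
  defines "a \<equiv> \<lambda>k. real (4 * k choose 2 * k) / 16 ^ k"
  shows "(4 * real (Suc r) + 1) * a (Suc r) * sin_pow_half_integral (2 * Suc r)
    = (4 * real r + 1) * a r * sin_pow_half_integral (2 * r) + sqrt 2 * a (Suc r) / (4 * real (Suc r) - 1)"
proof -
  let ?J = sin_pow_half_integral
  have binom: "4 * (2 * real r + 2) * (2 * real r + 1) * a (Suc r) = (4 * real r + 3) * (4 * real r + 1) * a r"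
    unfolding a_def by (rule central_binomial_weight_Suc)
  have "(4 * real (2 * r + 2) ^ 2 - 1) * ?J (2 * r + 2) = 4 * real (2 * r + 2) * real (2 * r + 1) * ?J (2 * r) + sqrt 2"
    by (rule sin_pow_half_integral_recurrence)
  then have recurrence: "(4 * real r + 3) * ((4 * real r + 5) * ?J (2 * Suc r))
      = 4 * (2 * real r + 2) * (2 * real r + 1) * ?J (2 * r) + sqrt 2"
    by (simp add: algebra_simps power2_eq_square)
  have denom: "4 * real (Suc r) - 1 = 4 * real r + 3" "4 * real r + 3 \<noteq> 0"
    by simp_all
  have "(4 * real r + 3) * ((4 * real (Suc r) + 1) * a (Suc r) * ?J (2 * Suc r))
      = a (Suc r) * ((4 * real r + 3) * ((4 * real r + 5) * ?J (2 * Suc r)))"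
    by (simp add: algebra_simps)
  also have "\<dots> = 4 * (2 * real r + 2) * (2 * real r + 1) * a (Suc r) * ?J (2 * r) + sqrt 2 * a (Suc r)"
    unfolding recurrence by (simp add: algebra_simps)
  also have "\<dots> = (4 * real r + 3) * ((4 * real r + 1) * a r * ?J (2 * r)) + sqrt 2 * a (Suc r)"
    unfolding binom by (simp add: algebra_simps)
  also have "\<dots> = (4 * real r + 3) * ((4 * real r + 1) * a r * ?J (2 * r) + sqrt 2 * a (Suc r) / (4 * real (Suc r) - 1))"
    unfolding denom(1) using denom(2) by (simp add: distrib_left)
  finally show ?thesis
    using denom(2) by (simp only: mult_cancel_left) simp
qed

lemma sin_pow_half_integral_even_weighted:
  "(4 * real r + 1) * (real (4 * r choose 2 * r) / 16 ^ r) * sin_pow_half_integral (2 * r)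
    = 2 + sqrt 2 * (\<Sum>k=0..r. real (4 * k choose 2 * k) / ((4 * real k - 1) * 16 ^ k))"
proof (induction r)
  case 0
  show ?case
    by (simp add: sin_pow_half_integral_0)
next
  case (Suc r)
  then show ?case
    using sin_pow_half_integral_even_step[of r] by (simp add: algebra_simps)
qed

theorem proposition4p0p1:
  fixes r :: nat
  shows "integral {0..pi/2} (\<lambda>x::real. sin x ^ (2*r) * sin (x/2)) =
    16 ^ r / ((4 * real r + 1) * real ((4*r) choose (2*r))) *
    (2 + sqrt 2 * (\<Sum>k=0..r. real ((4*k) choose (2*k)) / ((4 * real k - 1) * 16 ^ k)))"
proof -
  let ?S = "\<Sum>k=0..r. real ((4*k) choose (2*k)) / ((4 * real k - 1) * 16 ^ k)"
  have "(4 * real r + 1) * (real (4 * r choose 2 * r) / 16 ^ r) \<noteq> 0"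
    by simp
  then have "sin_pow_half_integral (2 * r) = (2 + sqrt 2 * ?S) / ((4 * real r + 1) * (real (4 * r choose 2 * r) / 16 ^ r))"
    using sin_pow_half_integral_even_weighted[of r] by (simp add: eq_divide_eq divide_eq_eq mult.commute)
  then show ?thesis
    unfolding sin_pow_half_integral_def by (simp add: mult.commute)
qed

end
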